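(* Suppose $A$ is a finite set and $E_1,E_2,\ldots,E_\ell$ are $\ell>1$ subsets of $A$ such that: (i) for all $1\leq i<\ell$, $E_i\not\subseteq E_{i+1}$ and $E_{i+1}\not\subseteq E_i$; (ii) for all $a\in A$ and $1\leq i<j\leq\ell$, if $a\in E_i\cap E_j$ then $a\in E_k$ for all $i\leq k\leq j$. Then $\ell\leq|A|$. *)

theory Defs
  imports Main
begin

end

theory Submission
  imports Defs
begin

text \<open>For \<open>i < l\<close> pick \<open>a\<^sub>i \<in> E\<^sub>i - E\<^sub>i\<^sub>+\<^sub>1\<close>, and any \<open>a\<^sub>l \<in> E\<^sub>l\<close> (nonempty, as \<open>E\<^sub>l \<notsubseteq> E\<^sub>l\<^sub>-\<^sub>1\<close>). By the
  interval condition an element that leaves the chain at step \<open>i\<close> never returns, so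
  \<open>a\<^sub>i \<notin> E\<^sub>j\<close> for all \<open>j > i\<close>, whereas \<open>a\<^sub>j \<in> E\<^sub>j\<close>. Hence the \<open>a\<^sub>i\<close> are \<open>l\<close> distinct
  elements of \<open>A\<close>.\<close>

lemma not_mem_later_if_left:
  fixes E :: "nat \<Rightarrow> 'a set"
  assumes interval: "\<And>k. i \<le> k \<Longrightarrow> k \<le> j \<Longrightarrow> a \<in> E i \<Longrightarrow> a \<in> E j \<Longrightarrow> a \<in> E k"
    and "a \<in> E i" "a \<notin> E (i + 1)" "i < j"
  shows "a \<notin> E j"
  using assms(2-4) interval[of "i + 1"] by auto

lemma inj_on_if_separated_by_later_sets:
  fixes f :: "nat \<Rightarrow> 'a" and E :: "nat \<Rightarrow> 'a set"
  assumes "\<And>i. i \<in> S \<Longrightarrow> f i \<in> E i"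
    and "\<And>i j. i \<in> S \<Longrightarrow> j \<in> S \<Longrightarrow> i < j \<Longrightarrow> f i \<notin> E j"
  shows "inj_on f S"
proof (rule inj_onI)
  fix i j assume "i \<in> S" "j \<in> S" "f i = f j"
  then show "i = j"
    using assms by (metis linorder_neqE_nat)
qed

theorem lemma18:
  fixes A :: "'a set" and E :: "nat \<Rightarrow> 'a set" and l :: nat
  assumes "finite A"
    and "l > 1"
    and "\<And>i. 1 \<le> i \<Longrightarrow> i \<le> l \<Longrightarrow> E i \<subseteq> A"
    and "\<And>i. 1 \<le> i \<Longrightarrow> i < l \<Longrightarrow> \<not> E i \<subseteq> E (i + 1) \<and> \<not> E (i + 1) \<subseteq> E i"
    and "\<And>a i j k. a \<in> A \<Longrightarrow> 1 \<le> i \<Longrightarrow> i < j \<Longrightarrow> j \<le> l \<Longrightarrow>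
           a \<in> E i \<inter> E j \<Longrightarrow> i \<le> k \<Longrightarrow> k \<le> j \<Longrightarrow> a \<in> E k"
  shows "l \<le> card A"
proof -
  have "\<forall>i\<in>{1..<l}. \<exists>x. x \<in> E i - E (i + 1)"
    using assms(4) by (simp add: subset_iff)
  then obtain g where g: "\<forall>i\<in>{1..<l}. g i \<in> E i - E (i + 1)"
    by (rule bchoice [THEN exE])
  have "\<not> E (l - 1 + 1) \<subseteq> E (l - 1)"
    using assms(2) assms(4)[of "l - 1"] by simp
  then obtain a where a: "a \<in> E l"
    using assms(2) by auto
  define f where "f i = (if i < l then g i else a)" for i
  have f_mem: "f i \<in> E i" if "i \<in> {1..l}" for i
    using that g a by (auto simp: f_def)
  have f_in_A: "f ` {1..l} \<subseteq> A"
  proof (rule image_subsetI)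
    show "f i \<in> A" if "i \<in> {1..l}" for i
      using f_mem[OF that] assms(3)[of i] that by auto
  qed
  have f_not_later: "f i \<notin> E j" if i: "i \<in> {1..l}" and j: "j \<in> {1..l}" and "i < j" for i j
  proof (rule not_mem_later_if_left)
    have "f i \<in> A"
      using f_in_A i by blast
    then show "f i \<in> E k" if "i \<le> k" "k \<le> j" "f i \<in> E i" "f i \<in> E j" for k
      using assms(5)[of "f i" i j k] that i j \<open>i < j\<close> by simp
    show "f i \<in> E i" "f i \<notin> E (i + 1)"
      using g i j \<open>i < j\<close> by (simp_all add: f_def)
  qed fact
  have "inj_on f {1..l}"
    using f_mem f_not_later by (rule inj_on_if_separated_by_later_sets[where E = E])
  then show ?thesis
    using card_inj_on_le[OF _ f_in_A assms(1)] by simp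
qed

end
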